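(* Let $K\ge0$ satisfy: $|K(u)|\le\bar K<\infty$, $\int_{\mathbb R}|K(u)|^sdu<\infty$ for some $s>2$, $K(u)=0$ for $|u|>1$, and $|K(u)-K(u')|\le\Lambda_1|u-u'|$ for all $u,u'\in\mathbb R$ with some $1\le\Lambda_1<\infty$. For $x\in[0,1]$ let $G_x=[-1,0]$ if $x=1$, $[-1,1]$ if $x\in(0,1)$, $[0,1]$ if $x=0$, and suppose $\mu(\{u\in G_x:K(u)>0\})>0$ for every $x\in[0,1]$ ($\mu$ Lebesgue measure). Let $$S_{T,x}=\frac1T\sum_{t=1}^TK_h(t/T-x)\begin{pmatrix}1&\frac{t/T-x}{h}\\ \frac{t/T-x}{h}&(\frac{t/T-x}{h})^2\end{pmatrix},$$ with $K_h(u)=K(u/h)/h$, $h=h_T>0$, $h\to0$, $Th\to\infty$. Then there exists $\lambda_0>0$ such that, for all $v\in\mathbb R^2$ and all sufficiently large $T$, $$\sup_{x\in[0,1]}\|S_{T,x}^{-1}v\|\le\frac1{\lambda_0}\|v\|,$$ where $\|\cdot\|$ is the Euclidean norm on $\mathbb R^2$. *)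

theory Defs
  imports "HOL-Analysis.Analysis"
begin

definition Gset :: "real \<Rightarrow> real set" where
  "Gset x = (if x = 1 then {-1..0} else if x = 0 then {0..1} else {-1..1})"

definition Kh :: "(real \<Rightarrow> real) \<Rightarrow> real \<Rightarrow> real \<Rightarrow> real" where
  "Kh K h u = K (u / h) / h"

definition locmat :: "real \<Rightarrow> real^2^2" where
  "locmat a = (\<chi> i j. (if i = 1 then 1 else a) * (if j = 1 then 1 else a))"

definition Smat :: "(real \<Rightarrow> real) \<Rightarrow> real \<Rightarrow> nat \<Rightarrow> real \<Rightarrow> real^2^2" where
  "Smat K h T x = (1 / real T) *\<^sub>R
     (\<Sum>t = 1..T. Kh K h (real t / real T - x) *\<^sub>R locmat ((real t / real T - x) / h))"

end

theory Submission
  imports Defs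
begin

(* The quadratic form c' S_{T,x} c is the kernel-weighted average, over the grid points
   u_t = (t/T - x)/h, of (c1 + u_t c2)^2. The measure hypothesis at x = 0 and x = 1 together with
   Lipschitz continuity bounds K from below on intervals [a1,b1] in (0,1) and [a2,b2] in (-1,0).
   The square of an affine function cannot be small at two points a fixed distance apart, so on a
   quarter of such an interval it is at least a constant times |c|^2; once Th is large this
   quarter carries of order Th grid points, provided the window x + h [a,b] lies in [1/T, 1],
   which holds for [a1,b1] when x <= 1/2 and for [a2,b2] when x >= 1/2. So S_{T,x} is uniformly
   coercive, and coercivity bounds the inverse. *)

lemma inner_sum_matrix_vector:
  "finite A \<Longrightarrow> (c::real^'n) \<bullet> ((\<Sum>t\<in>A. M t) *v c) = (\<Sum>t\<in>A. c \<bullet> (M t *v c))"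
  by (induction A rule: finite_induct) (auto simp: matrix_vector_mult_add_rdistrib inner_add_right)

lemma inner_scaleR_matrix_vector: "(c::real^'n) \<bullet> ((r *\<^sub>R M) *v c) = r * (c \<bullet> (M *v c))"
  by (metis inner_scaleR_right scaleR_matrix_vector_assoc)

lemma inner_locmat: "(c::real^2) \<bullet> (locmat a *v c) = (c$1 + a * c$2)^2"
  by (simp add: locmat_def inner_vec_def matrix_vector_mult_def sum_2 power2_eq_square
      algebra_simps)

lemma inner_Smat:
  "(c::real^2) \<bullet> (Smat K h T x *v c) =
   (1 / real T) *
     (\<Sum>t = 1..T. Kh K h (real t / real T - x) * (c$1 + ((real t / real T - x) / h) * c$2)^2)"
  by (simp add: Smat_def inner_scaleR_matrix_vector inner_sum_matrix_vector inner_locmat)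

lemma norm_vec2_squared: "(norm (c::real^2))^2 = (c$1)^2 + (c$2)^2"
  by (simp add: norm_vec_def L2_set_def sum_2)

lemma affine_square_two_points:
  fixes p q u v :: real
  assumes "\<bar>u\<bar> \<le> 1" "\<bar>v\<bar> \<le> 1"
  shows "(v - u)^2 * (p^2 + q^2) \<le> 4 * ((p + u * q)^2 + (p + v * q)^2)"
proof -
  define f g where "f = p + u * q" and "g = p + v * q"
  have sq_diff_le: "(y - z)^2 \<le> 2 * y^2 + 2 * z^2" for y z :: real
    using zero_le_power2[of "y + z"] unfolding power2_diff power2_sum by linarith
  have "u^2 \<le> 1" "v^2 \<le> 1"
    using assms abs_square_le_1 by blast+
  then have "v^2 * f^2 \<le> f^2" "u^2 * g^2 \<le> g^2"
    by (simp_all add: mult_left_le_one_le)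
  moreover have "(p * (v - u))^2 = (v * f - u * g)^2" "(q * (v - u))^2 = (g - f)^2"
    unfolding f_def g_def by algebra+
  ultimately have p_part: "(p * (v - u))^2 \<le> 2 * f^2 + 2 * g^2"
    and q_part: "(q * (v - u))^2 \<le> 2 * f^2 + 2 * g^2"
    using sq_diff_le[of "v * f" "u * g"] sq_diff_le[of g f] by (simp_all add: power_mult_distrib)
  have "(v - u)^2 * (p^2 + q^2) = (p * (v - u))^2 + (q * (v - u))^2"
    by algebra
  also have "\<dots> \<le> (2 * f^2 + 2 * g^2) + (2 * f^2 + 2 * g^2)"
    using p_part q_part by (rule add_mono)
  also have "\<dots> = 4 * ((p + u * q)^2 + (p + v * q)^2)"
    by (simp add: f_def g_def)
  finally show ?thesis .
qed

lemma affine_square_ge_on_quarter: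
  fixes p q a b :: real
  assumes "-1 \<le> a" "a \<le> b" "b \<le> 1"
  obtains a' where "a \<le> a'" "a' + (b - a) / 4 \<le> b"
    "\<And>u. u \<in> {a'..a' + (b - a) / 4} \<Longrightarrow> (b - a)^2 * (p^2 + q^2) / 32 \<le> (p + u * q)^2"
proof -
  have quarter: "a + (b - a) / 4 \<le> b" "a \<le> b - (b - a) / 4"
    using assms by argo+
  show ?thesis
  proof (cases "\<forall>u \<in> {a..a + (b - a) / 4}. (b - a)^2 * (p^2 + q^2) / 32 \<le> (p + u * q)^2")
    case True
    with quarter show ?thesis
      by (intro that[of a]) auto
  next
    case False
    then obtain u where u: "u \<in> {a..a + (b - a) / 4}" "(p + u * q)^2 < (b - a)^2 * (p^2 + q^2) / 32"
      by (auto simp: not_le)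
    have "(b - a)^2 * (p^2 + q^2) / 32 \<le> (p + v * q)^2" if v: "v \<in> {b - (b - a) / 4..b}" for v
    proof -
      have "0 \<le> (b - a) / 2" "(b - a) / 2 \<le> v - u" "\<bar>u\<bar> \<le> 1" "\<bar>v\<bar> \<le> 1"
        using u(1) v assms by (auto simp: abs_le_iff; argo)+
      then have "((b - a) / 2)^2 * (p^2 + q^2) \<le> (v - u)^2 * (p^2 + q^2)"
        by (intro mult_right_mono power_mono) simp_all
      also have "\<dots> \<le> 4 * ((p + u * q)^2 + (p + v * q)^2)"
        using \<open>\<bar>u\<bar> \<le> 1\<close> \<open>\<bar>v\<bar> \<le> 1\<close> by (rule affine_square_two_points)
      finally show ?thesis
        using u(2) by (simp add: power_divide)
    qed
    with quarter show ?thesis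
      by (intro that[of "b - (b - a) / 4"]) auto
  qed
qed

lemma card_integers_between:
  fixes y z :: real and T :: nat
  assumes "1 \<le> y" "z \<le> real T"
  shows "z - y - 1 \<le> real (card {t \<in> {1..T}. y \<le> real t \<and> real t \<le> z})"
proof (cases "z < y + 1")
  case True
  then show ?thesis by simp
next
  case False
  let ?a = "nat \<lceil>y\<rceil>" and ?b = "nat \<lfloor>z\<rfloor>"
  have "{?a..?b} \<subseteq> {t \<in> {1..T}. y \<le> real t \<and> real t \<le> z}"
    using assms False by (auto; linarith)
  then have "card {?a..?b} \<le> card {t \<in> {1..T}. y \<le> real t \<and> real t \<le> z}"
    by (intro card_mono) simp_all
  moreover have "z - y - 1 \<le> real (card {?a..?b})"
    using False assms by (simp; linarith)
  ultimately show ?thesis by linarith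
qed

lemma kernel_average_ge:
  fixes K g :: "real \<Rightarrow> real" and T :: nat
  assumes K_nonneg: "\<And>u. 0 \<le> K u" and g_nonneg: "\<And>u. 0 \<le> g u"
    and Kg_ge: "\<And>u. u \<in> {a..b} \<Longrightarrow> m \<le> K u * g u" and "0 \<le> m" and "0 < h"
    and many_points: "2 \<le> real T * h * (b - a)"
    and window: "1 / real T \<le> x + h * a" "x + h * b \<le> 1"
  shows "m * (b - a) / 2 \<le>
    (1 / real T) * (\<Sum>t = 1..T. Kh K h (real t / real T - x) * g ((real t / real T - x) / h))"
proof -
  define F where "F t = Kh K h (real t / real T - x) * g ((real t / real T - x) / h)" for t
  define y z where "y = real T * (x + h * a)" and "z = real T * (x + h * b)"
  define A where "A = {t \<in> {1..T}. y \<le> real t \<and> real t \<le> z}"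
  have T_pos: "0 < real T"
    using many_points \<open>0 < h\<close> by (cases "T = 0") auto
  have "1 \<le> y"
    using window(1) T_pos by (simp add: y_def field_simps)
  moreover have "z \<le> real T"
    using mult_left_mono[OF window(2), of "real T"] T_pos by (simp add: z_def)
  ultimately have card_A: "z - y - 1 \<le> real (card A)"
    unfolding A_def by (rule card_integers_between)
  have "z - y = real T * h * (b - a)"
    by (simp add: y_def z_def algebra_simps)
  with card_A many_points have "real T * h * (b - a) / 2 \<le> real (card A)"
    by linarith
  have F_nonneg: "0 \<le> F t" for t
    using K_nonneg g_nonneg \<open>0 < h\<close> by (simp add: F_def Kh_def)
  have F_ge: "m / h \<le> F t" if "t \<in> A" for t
  proof -
    from that have "(real t / real T - x) / h \<in> {a..b}"
      using T_pos \<open>0 < h\<close> by (auto simp: A_def y_def z_def field_simps)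
    then show ?thesis
      using Kg_ge \<open>0 < h\<close> by (simp add: F_def Kh_def divide_right_mono)
  qed
  have "m * (b - a) / 2 = (1 / real T) * (real T * h * (b - a) / 2 * (m / h))"
    using T_pos \<open>0 < h\<close> by (simp add: field_simps)
  also have "\<dots> \<le> (1 / real T) * (real (card A) * (m / h))"
    using \<open>real T * h * (b - a) / 2 \<le> real (card A)\<close> \<open>0 \<le> m\<close> \<open>0 < h\<close>
    by (intro mult_left_mono mult_right_mono) simp_all
  also have "\<dots> \<le> (1 / real T) * (\<Sum>t\<in>A. F t)"
    using sum_mono[of A "\<lambda>_. m / h" F] F_ge by (intro mult_left_mono) simp_all
  also have "\<dots> \<le> (1 / real T) * (\<Sum>t = 1..T. F t)"
    using F_nonneg by (intro mult_left_mono sum_mono2) (auto simp: A_def)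
  finally show ?thesis
    by (simp add: F_def)
qed

lemma Smat_quadratic_form_ge:
  fixes K :: "real \<Rightarrow> real" and T :: nat and c :: "real^2"
  assumes K_nonneg: "\<And>u. 0 \<le> K u" and K_ge: "\<And>u. u \<in> {a..b} \<Longrightarrow> \<delta> \<le> K u"
    and "0 \<le> \<delta>" "-1 \<le> a" "b \<le> 1" "0 < h"
    and many_points: "8 \<le> real T * h * (b - a)"
    and window: "1 / real T \<le> x + h * a" "x + h * b \<le> 1"
  shows "\<delta> * (b - a)^3 / 256 * (norm c)^2 \<le> c \<bullet> (Smat K h T x *v c)"
proof -
  have "a \<le> b"
  proof (rule ccontr)
    assume "\<not> a \<le> b"
    then have "real T * h * (b - a) \<le> 0"
      using \<open>0 < h\<close> by (intro mult_nonneg_nonpos) auto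
    with many_points show False
      by linarith
  qed
  define \<kappa> where "\<kappa> = (b - a)^2 * (norm c)^2 / 32"
  obtain a' where a': "a \<le> a'" "a' + (b - a) / 4 \<le> b"
    and large: "\<And>u. u \<in> {a'..a' + (b - a) / 4} \<Longrightarrow> \<kappa> \<le> (c$1 + u * c$2)^2"
    using affine_square_ge_on_quarter[OF \<open>-1 \<le> a\<close> \<open>a \<le> b\<close> \<open>b \<le> 1\<close>, of "c$1" "c$2"]
    unfolding \<kappa>_def norm_vec2_squared by blast
  have "\<delta> * \<kappa> * ((a' + (b - a) / 4) - a') / 2 \<le> (1 / real T) *
      (\<Sum>t = 1..T. Kh K h (real t / real T - x) * (c$1 + ((real t / real T - x) / h) * c$2)^2)"
  proof (rule kernel_average_ge[OF K_nonneg])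
    fix u assume "u \<in> {a'..a' + (b - a) / 4}"
    with a' have "\<delta> \<le> K u" "\<kappa> \<le> (c$1 + u * c$2)^2"
      using K_ge large by auto
    then show "\<delta> * \<kappa> \<le> K u * (c$1 + u * c$2)^2"
      using \<open>0 \<le> \<delta>\<close> by (intro mult_mono) (simp_all add: \<kappa>_def)
  next
    show "2 \<le> real T * h * ((a' + (b - a) / 4) - a')"
      using many_points by simp
    have "h * a \<le> h * a'" "h * (a' + (b - a) / 4) \<le> h * b"
      using a' \<open>0 < h\<close> by simp_all
    with window show "1 / real T \<le> x + h * a'" "x + h * (a' + (b - a) / 4) \<le> 1"
      by linarith+
  qed (use \<open>0 \<le> \<delta>\<close> \<open>0 < h\<close> in \<open>simp_all add: \<kappa>_def\<close>)
  moreover have "\<delta> * \<kappa> * ((a' + (b - a) / 4) - a') / 2 = \<delta> * (b - a)^3 / 256 * (norm c)^2"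
    by (simp add: \<kappa>_def power3_eq_cube power2_eq_square field_simps)
  ultimately show ?thesis
    by (simp only: inner_Smat)
qed

lemma Lipschitz_positive_on_subinterval:
  fixes K :: "real \<Rightarrow> real"
  assumes pos_measure: "0 < emeasure lborel {u \<in> {a..b}. 0 < K u}"
    and K_Lip: "\<And>u u'. \<bar>K u - K u'\<bar> \<le> \<Lambda> * \<bar>u - u'\<bar>" and "0 < \<Lambda>"
  obtains l r \<delta> where "a < l" "l < r" "r < b" "0 < \<delta>" "\<And>u. u \<in> {l..r} \<Longrightarrow> \<delta> \<le> K u"
proof -
  have "\<exists>p. a < p \<and> p < b \<and> 0 < K p"
  proof (rule ccontr)
    assume "\<nexists>p. a < p \<and> p < b \<and> 0 < K p"
    then have "{u \<in> {a..b}. 0 < K u} \<subseteq> {a, b}"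
      by force
    then have "countable {u \<in> {a..b}. 0 < K u}"
      by (rule countable_subset) simp
    then have "emeasure lborel {u \<in> {a..b}. 0 < K u} = 0"
      by (rule emeasure_lborel_countable)
    with pos_measure show False
      by simp
  qed
  then obtain p where p: "a < p" "p < b" "0 < K p"
    by blast
  define \<rho> where "\<rho> = min (K p / (2 * \<Lambda>)) (min ((p - a) / 2) ((b - p) / 2))"
  have "0 < \<rho>"
    using p \<open>0 < \<Lambda>\<close> by (simp add: \<rho>_def)
  have \<rho>_le: "\<rho> \<le> K p / (2 * \<Lambda>)" "\<rho> \<le> (p - a) / 2" "\<rho> \<le> (b - p) / 2"
    unfolding \<rho>_def by (simp_all only: min.cobounded1 min.cobounded2 min.coboundedI2)
  have "K p / 2 \<le> K u" if "u \<in> {p - \<rho>..p + \<rho>}" for u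
  proof -
    have "\<bar>u - p\<bar> \<le> K p / (2 * \<Lambda>)"
      using that \<rho>_le(1) by (simp add: abs_le_iff)
    then have "\<Lambda> * \<bar>u - p\<bar> \<le> K p / 2"
      using \<open>0 < \<Lambda>\<close> by (simp add: field_simps)
    with K_Lip[of u p] show ?thesis
      by linarith
  qed
  moreover have "a < p - \<rho>" "p + \<rho> < b"
    using p \<rho>_le by argo+
  ultimately show ?thesis
    using p \<open>0 < \<rho>\<close> by (intro that[of "p - \<rho>" "p + \<rho>" "K p / 2"]) auto
qed

lemma eventually_window_right:
  fixes h :: "nat \<Rightarrow> real"
  assumes "h \<longlonglongrightarrow> 0" and Th_lim: "filterlim (\<lambda>T. real T * h T) at_top sequentially"
    and "0 < a"
  shows "\<forall>\<^sub>F T in sequentially. \<forall>x \<in> {0..1/2}. 1 / real T \<le> x + h T * a \<and> x + h T * b \<le> 1"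
proof -
  have "\<forall>\<^sub>F T in sequentially. 1 / a \<le> real T * h T"
    using Th_lim by (simp add: filterlim_at_top)
  moreover have "(\<lambda>T. h T * b) \<longlonglongrightarrow> 0"
    using \<open>h \<longlonglongrightarrow> 0\<close> by (rule tendsto_mult_left_zero)
  then have "\<forall>\<^sub>F T in sequentially. h T * b < 1/2"
    by (rule order_tendstoD) simp
  ultimately show ?thesis
  proof eventually_elim
    case (elim T)
    then have "1 \<le> real T * (h T * a)"
      using \<open>0 < a\<close> by (simp add: field_simps)
    then have "1 / real T \<le> h T * a"
      by (cases "T = 0") (simp_all add: field_simps)
    with elim show ?case
      by auto
  qed
qed

lemma eventually_window_left:
  fixes h :: "nat \<Rightarrow> real"
  assumes "\<And>T. 0 < h T" and "h \<longlonglongrightarrow> 0" and "b \<le> 0"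
  shows "\<forall>\<^sub>F T in sequentially. \<forall>x \<in> {1/2..1}. 1 / real T \<le> x + h T * a \<and> x + h T * b \<le> 1"
proof -
  have "(\<lambda>T. h T * a) \<longlonglongrightarrow> 0"
    using \<open>h \<longlonglongrightarrow> 0\<close> by (rule tendsto_mult_left_zero)
  then have "\<forall>\<^sub>F T in sequentially. -(1/4) < h T * a"
    by (rule order_tendstoD) simp
  moreover have "\<forall>\<^sub>F T in sequentially. 4 \<le> T"
    by (rule eventually_ge_at_top)
  ultimately show ?thesis
  proof eventually_elim
    case (elim T)
    have "1 / real T \<le> 1/4"
      using elim(2) by simp
    moreover have "h T * b \<le> 0"
      using less_imp_le[OF assms(1)] \<open>b \<le> 0\<close> by (rule mult_nonneg_nonpos)
    ultimately show ?case
      using elim(1) by simp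
  qed
qed

lemma eventually_Smat_coercive:
  fixes K :: "real \<Rightarrow> real" and h :: "nat \<Rightarrow> real" and X :: "real set"
  assumes K_nonneg: "\<And>u. 0 \<le> K u" and K_ge: "\<And>u. u \<in> {a..b} \<Longrightarrow> \<delta> \<le> K u"
    and "0 \<le> \<delta>" "-1 \<le> a" "a < b" "b \<le> 1"
    and h_pos: "\<And>T. 0 < h T" and Th_lim: "filterlim (\<lambda>T. real T * h T) at_top sequentially"
    and window: "\<forall>\<^sub>F T in sequentially. \<forall>x \<in> X. 1 / real T \<le> x + h T * a \<and> x + h T * b \<le> 1"
    and lam_le: "lam \<le> \<delta> * (b - a)^3 / 256"
  shows "\<forall>\<^sub>F T in sequentially. \<forall>x \<in> X. \<forall>c.
           lam * (norm c)^2 \<le> c \<bullet> (Smat K (h T) T x *v c)"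
proof -
  have "\<forall>\<^sub>F T in sequentially. 8 / (b - a) \<le> real T * h T"
    using Th_lim by (simp add: filterlim_at_top)
  with window show ?thesis
  proof eventually_elim
    case (elim T)
    then have many_points: "8 \<le> real T * h T * (b - a)"
      using \<open>a < b\<close> by (simp add: field_simps)
    show ?case
    proof (intro ballI allI)
      fix x c
      assume "x \<in> X"
      with elim(1) have "1 / real T \<le> x + h T * a" "x + h T * b \<le> 1"
        by auto
      with K_nonneg K_ge \<open>0 \<le> \<delta>\<close> \<open>-1 \<le> a\<close> \<open>b \<le> 1\<close> h_pos many_points
      have "\<delta> * (b - a)^3 / 256 * (norm c)^2 \<le> c \<bullet> (Smat K (h T) T x *v c)"
        by (rule Smat_quadratic_form_ge)
      moreover have "lam * (norm c)^2 \<le> \<delta> * (b - a)^3 / 256 * (norm c)^2"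
        using lam_le by (rule mult_right_mono) simp
      ultimately show "lam * (norm c)^2 \<le> c \<bullet> (Smat K (h T) T x *v c)"
        by linarith
    qed
  qed
qed

lemma coercive_matrix_inv_bound:
  fixes S :: "real^'n^'n" and lam :: real
  assumes "0 < lam" and coercive: "\<And>c. lam * (norm c)^2 \<le> c \<bullet> (S *v c)"
  shows "invertible S \<and> (\<forall>v. norm (matrix_inv S *v v) \<le> norm v / lam)"
proof -
  have norm_le: "norm w \<le> norm (S *v w) / lam" for w
  proof -
    have "lam * norm w * norm w \<le> norm (S *v w) * norm w"
      using coercive[of w] norm_cauchy_schwarz[of w "S *v w"]
      by (simp add: power2_eq_square algebra_simps)
    then show ?thesis
      using \<open>0 < lam\<close> by (cases "w = 0") (simp_all add: pos_le_divide_eq mult.commute)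
  qed
  then have "S *v x = 0 \<Longrightarrow> x = 0" for x
    by (metis div_0 norm_eq_zero norm_le_zero_iff)
  then have "invertible S"
    unfolding invertible_left_inverse matrix_left_invertible_ker by blast
  then have "S ** matrix_inv S = mat 1"
    unfolding matrix_inv_def invertible_def by (rule someI2_ex) blast
  then have "S *v (matrix_inv S *v v) = v" for v
    by (simp add: matrix_vector_mul_assoc)
  with norm_le have "norm (matrix_inv S *v v) \<le> norm v / lam" for v
    by metis
  with \<open>invertible S\<close> show ?thesis
    by blast
qed

theorem lemma7:
  fixes K :: "real \<Rightarrow> real" and h :: "nat \<Rightarrow> real"
    and Kbar s \<Lambda>1 :: real
  assumes K_nonneg: "\<And>u. K u \<ge> 0"
    and K_bdd: "\<And>u. \<bar>K u\<bar> \<le> Kbar"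
    and s_gt: "s > 2"
    and K_Ls: "(\<lambda>u. \<bar>K u\<bar> powr s) integrable_on UNIV"
    and K_supp: "\<And>u. \<bar>u\<bar> > 1 \<Longrightarrow> K u = 0"
    and Lambda_ge: "1 \<le> \<Lambda>1"
    and K_Lip: "\<And>u u'. \<bar>K u - K u'\<bar> \<le> \<Lambda>1 * \<bar>u - u'\<bar>"
    and K_pos: "\<And>x. x \<in> {0..1} \<Longrightarrow> emeasure lborel {u \<in> Gset x. K u > 0} > 0"
    and h_pos: "\<And>T. h T > 0"
    and h_lim: "h \<longlonglongrightarrow> 0"
    and Th_lim: "filterlim (\<lambda>T. real T * h T) at_top sequentially"
  shows "\<exists>lam0 > 0. \<forall>\<^sub>F T in sequentially. \<forall>x \<in> {0..1}.
           invertible (Smat K (h T) T x) \<and>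
           (\<forall>v :: real^2. norm (matrix_inv (Smat K (h T) T x) *v v) \<le> norm v / lam0)"
proof -
  have "0 < \<Lambda>1"
    using Lambda_ge by simp
  have "0 < emeasure lborel {u \<in> {0..1}. 0 < K u}"
    using K_pos[of 0] by (simp add: Gset_def)
  then obtain a1 b1 \<delta>1
    where right: "0 < a1" "a1 < b1" "b1 < 1" "0 < \<delta>1" "\<And>u. u \<in> {a1..b1} \<Longrightarrow> \<delta>1 \<le> K u"
    by (rule Lipschitz_positive_on_subinterval[OF _ K_Lip \<open>0 < \<Lambda>1\<close>]) blast
  have "0 < emeasure lborel {u \<in> {-1..0}. 0 < K u}"
    using K_pos[of 1] by (simp add: Gset_def)
  then obtain a2 b2 \<delta>2
    where left: "-1 < a2" "a2 < b2" "b2 < 0" "0 < \<delta>2" "\<And>u. u \<in> {a2..b2} \<Longrightarrow> \<delta>2 \<le> K u"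
    by (rule Lipschitz_positive_on_subinterval[OF _ K_Lip \<open>0 < \<Lambda>1\<close>]) blast
  define lam where "lam = min (\<delta>1 * (b1 - a1)^3 / 256) (\<delta>2 * (b2 - a2)^3 / 256)"
  have "\<forall>\<^sub>F T in sequentially. \<forall>x \<in> {0..1/2}. \<forall>c.
      lam * (norm c)^2 \<le> c \<bullet> (Smat K (h T) T x *v c)"
    by (intro eventually_Smat_coercive[where a = a1 and b = b1 and \<delta> = \<delta>1]
        eventually_window_right h_lim Th_lim h_pos K_nonneg right)
      (use right in \<open>auto simp: lam_def\<close>)
  moreover have "\<forall>\<^sub>F T in sequentially. \<forall>x \<in> {1/2..1}. \<forall>c.
      lam * (norm c)^2 \<le> c \<bullet> (Smat K (h T) T x *v c)"
    by (intro eventually_Smat_coercive[where a = a2 and b = b2 and \<delta> = \<delta>2]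
        eventually_window_left h_lim Th_lim h_pos K_nonneg left)
      (use left in \<open>auto simp: lam_def\<close>)
  moreover have "{0..1} = {0..1/2} \<union> {1/2..1::real}"
    by auto
  ultimately have "\<forall>\<^sub>F T in sequentially. \<forall>x \<in> {0..1}. \<forall>c.
      lam * (norm c)^2 \<le> c \<bullet> (Smat K (h T) T x *v c)"
    by (simp add: ball_Un eventually_conj_iff)
  moreover have "0 < lam"
    using right left by (simp add: lam_def)
  ultimately show ?thesis
    by (intro exI[of _ lam] conjI) (auto elim!: eventually_mono simp: coercive_matrix_inv_bound)
qed

end
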